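(* Let $(\Omega(\mathcal{A}),\mathrm{d},\bar{\mathrm{d}})$ be a bidifferential graded algebra, and let $M,N,m\ge1$. Let $X$ ($N\times N$, invertible), $Y$ ($M\times N$), $P$, $R$ ($N\times N$) and $Q$ ($N\times M$) be matrices over $\mathcal{A}$ with $\mathrm{d}R=0$, $\mathrm{d}Q=0$, $\bar{\mathrm{d}}X=(\mathrm{d}X)P$, $\bar{\mathrm{d}}Y=(\mathrm{d}Y)P$ and $RX+QY=XP$, and put $\Phi=YX^{-1}$. Let $\Delta$ be an $m\times m$ matrix over $\mathcal{A}$ with $\bar{\mathrm{d}}\Delta=(\mathrm{d}\Delta)\Delta$, let $\mathcal{C}$ be an $m\times N$ matrix over $\mathcal{A}$ with $\mathrm{d}\mathcal{C}=0$, and let $G$ be an $m\times N$ matrix over $\mathcal{A}$ such that $$\bar{\mathrm{d}}(GX)=\mathrm{d}(GX)\,P,\qquad (GX)P-\Delta(GX)=\mathcal{C}X .$$ Then $\bar{\mathrm{d}}G+G\,Q\,\mathrm{d}\Phi=\mathrm{d}(\Delta G)$. Moreover, suppose $Q=VU^T$ with $U$ an $M\times m$ and $V$ an $N\times m$ matrix over $\mathcal{A}$ satisfying $\mathrm{d}U=\bar{\mathrm{d}}U=\mathrm{d}V=\bar{\mathrm{d}}V=0$, and suppose $GV$ is invertible. Then $g:=(GV)^{-1}$ satisfies $$\bar{\mathrm{d}}g^{-1}+g^{-1}\,\mathrm{d}\phi'=\mathrm{d}(\Delta g^{-1})\quad\text{with }\phi'=U^T\Phi V,$$ and consequently $\m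athrm{d}\big([\bar{\mathrm{d}}g-(\mathrm{d}g)\Delta]\,g^{-1}\big)=0$.
   Context: $\mathcal{A}$ is a unital associative algebra over $\mathbb{C}$ with identity $I$. A bidifferential graded algebra $(\Omega(\mathcal{A}),\mathrm{d},\bar{\mathrm{d}})$ consists of a graded associative algebra $\Omega(\mathcal{A})=\bigoplus_{r\ge 0}\Omega^r(\mathcal{A})$ with $\Omega^0(\mathcal{A})=\mathcal{A}$ (each $\Omega^r(\mathcal{A})$ an $\mathcal{A}$-bimodule) together with two linear maps $\mathrm{d},\bar{\mathrm{d}}:\Omega^r(\mathcal{A})\to\Omega^{r+1}(\mathcal{A})$ satisfying the graded Leibniz rule $\mathrm{d}(\alpha\beta)=(\mathrm{d}\alpha)\beta+(-1)^r\alpha\,\mathrm{d}\beta$ for $\alpha\in\Omega^r(\mathcal{A})$ (and likewise for $\bar{\mathrm{d}}$), and $\mathrm{d}^2=\bar{\mathrm{d}}^2=0$, $\mathrm{d}\bar{\mathrm{d}}+\bar{\mathrm{d}}\mathrm{d}=0$. The maps $\mathrm{d},\bar{\mathrm{d}}$ are applied entrywise to matrices with entries in $\Omega(\mathcal{A})$, and products of such matrices use the matrix product together with the product of $\Omega(\mathcal{A})$. $U^T$ denotes the transpose. *)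

theory Defs
  imports Complex_Main "Jordan_Normal_Form.Matrix"
begin

text \<open>The total algebra Omega is the type 'w (a unital
associative ring), made into a complex algebra by the scalar action sc. The graded pieces are
Om r; Omega is their internal direct sum; the base algebra A is Om 0.\<close>

locale bidga =
  fixes Om :: "nat \<Rightarrow> 'w::ring_1 set"
    and sc :: "complex \<Rightarrow> 'w \<Rightarrow> 'w"
    and d :: "'w \<Rightarrow> 'w"
    and db :: "'w \<Rightarrow> 'w"
  assumes sc_add: "sc a (x + y) = sc a x + sc a y"
    and sc_add_scalar: "sc (a + b) x = sc a x + sc b x"
    and sc_mult_scalar: "sc (a * b) x = sc a (sc b x)"
    and sc_one: "sc 1 x = x"
    and sc_mult_left: "sc a (x * y) = sc a x * y"
    and sc_mult_right: "sc a (x * y) = x * sc a y"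
    and Om_zero: "0 \<in> Om r"
    and Om_add: "x \<in> Om r \<Longrightarrow> y \<in> Om r \<Longrightarrow> x + y \<in> Om r"
    and Om_uminus: "x \<in> Om r \<Longrightarrow> - x \<in> Om r"
    and Om_sc: "x \<in> Om r \<Longrightarrow> sc a x \<in> Om r"
    and Om_mult: "x \<in> Om r \<Longrightarrow> y \<in> Om s \<Longrightarrow> x * y \<in> Om (r + s)"
    and Om_one: "1 \<in> Om 0"
    and Om_span: "\<exists>n f. (\<forall>r<n. f r \<in> Om r) \<and> w = (\<Sum>r<n. f r)"
    and Om_indep: "(\<forall>r<n. f r \<in> Om r) \<Longrightarrow> (\<Sum>r<n. f r) = 0 \<Longrightarrow> \<forall>r<n. f r = 0"
    and d_add: "d (x + y) = d x + d y"
    and d_sc: "d (sc a x) = sc a (d x)"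
    and d_deg: "x \<in> Om r \<Longrightarrow> d x \<in> Om (Suc r)"
    and d_leibniz: "x \<in> Om r \<Longrightarrow> d (x * y) = d x * y + (-1) ^ r * x * d y"
    and db_add: "db (x + y) = db x + db y"
    and db_sc: "db (sc a x) = sc a (db x)"
    and db_deg: "x \<in> Om r \<Longrightarrow> db x \<in> Om (Suc r)"
    and db_leibniz: "x \<in> Om r \<Longrightarrow> db (x * y) = db x * y + (-1) ^ r * x * db y"
    and d_d: "d (d x) = 0"
    and db_db: "db (db x) = 0"
    and d_db_anti: "d (db x) + db (d x) = 0"

definition invertible_over :: "'a::ring_1 set \<Rightarrow> 'a mat \<Rightarrow> bool" where
  "invertible_over S A \<longleftrightarrow> square_mat A \<and>
     (\<exists>B. elements_mat B \<subseteq> S \<and> inverts_mat A B \<and> inverts_mat B A)"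

definition minv :: "'a::ring_1 mat \<Rightarrow> 'a mat" where
  "minv A = (SOME B. inverts_mat A B \<and> inverts_mat B A)"

end

theory Submission
  imports Defs
begin

text \<open>
  Put T = R + Q Phi with Phi = Y X^-1. The relation R X + Q Y = X P says
  T X = X P, so T is X P X^-1. Cancelling X on the right, the linear equations for X and G X
  give db G = (d G) T, the constraint on G X gives G T - Delta G = C, and d R = d Q = 0 give
  d T = Q d Phi. Applying d to G T = Delta G + C and using the Leibniz rule yields the first
  claim db G + G Q d Phi = d (Delta G). For the second claim, right multiplication by the
  constant matrix V turns it into the m x m equation db h + h d phi' = d (Delta h) for
  h = G V; writing g = h^-1 and differentiating g h = 1 shows
  (db g - (d g) Delta) h = d phi' - d (g Delta h), which is d-closed since d o d = 0.
\<close>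

text \<open>In a bidifferential graded algebra both d and db are
  derivations with respect to the degree-0 part Om 0, since no sign arises there.\<close>
definition derivation_on :: "'a::ring_1 set \<Rightarrow> ('a \<Rightarrow> 'a) \<Rightarrow> bool" where
  "derivation_on S D \<longleftrightarrow>
     (\<forall>x y. D (x + y) = D x + D y) \<and> (\<forall>x\<in>S. \<forall>y. D (x * y) = D x * y + x * D y)"

lemma derivation_add: "derivation_on S D \<Longrightarrow> D (x + y) = D x + D y"
  unfolding derivation_on_def by blast

lemma derivation_mult: "derivation_on S D \<Longrightarrow> x \<in> S \<Longrightarrow> D (x * y) = D x * y + x * D y"
  unfolding derivation_on_def by blast

lemma derivation_zero: "derivation_on S D \<Longrightarrow> D 0 = 0"
  using derivation_add[of S D 0 0] by simp

lemma derivation_diff: "derivation_on S D \<Longrightarrow> D (x - y) = D x - D y"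
  using derivation_add[of S D "x - y" y] by (simp add: algebra_simps)

lemma derivation_sum: "derivation_on S D \<Longrightarrow> D (sum f I) = (\<Sum>i\<in>I. D (f i))"
  by (induction I rule: infinite_finite_induct) (simp_all add: derivation_zero derivation_add)

lemma derivation_one: "derivation_on S D \<Longrightarrow> 1 \<in> S \<Longrightarrow> D 1 = 0"
  using derivation_mult[of S D 1 1] by simp

lemma mat_derivation_add:
  assumes "derivation_on S D" "A \<in> carrier_mat n k" "B \<in> carrier_mat n k"
  shows "map_mat D (A + B) = map_mat D A + map_mat D B"
  using assms by (intro eq_matI) (auto simp: derivation_add)

lemma mat_derivation_diff:
  assumes "derivation_on S D" "A \<in> carrier_mat n k" "B \<in> carrier_mat n k"
  shows "map_mat D (A - B) = map_mat D A - map_mat D B"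
  using assms by (intro eq_matI) (auto simp: derivation_diff)

lemma mat_derivation_one: "derivation_on S D \<Longrightarrow> 1 \<in> S \<Longrightarrow> map_mat D (1\<^sub>m n) = 0\<^sub>m n n"
  by (intro eq_matI) (auto simp: derivation_zero derivation_one)

lemma mat_derivation_mult:
  assumes D: "derivation_on S D" and A: "A \<in> carrier_mat n k" "elements_mat A \<subseteq> S"
    and B: "B \<in> carrier_mat k l"
  shows "map_mat D (A * B) = map_mat D A * B + A * map_mat D B"
proof (rule eq_matI)
  fix i j assume "i < dim_row (map_mat D A * B + A * map_mat D B)"
    "j < dim_col (map_mat D A * B + A * map_mat D B)"
  then have i: "i < n" and j: "j < l" using A B by auto
  have AS: "A $$ (i, t) \<in> S" if "t < k" for t using A i that by blast
  have "map_mat D (A * B) $$ (i, j) = D (\<Sum>t<k. A $$ (i, t) * B $$ (t, j))"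
    using A B i j by (simp add: scalar_prod_def atLeast0LessThan)
  also have "\<dots> = (\<Sum>t<k. D (A $$ (i, t)) * B $$ (t, j) + A $$ (i, t) * D (B $$ (t, j)))"
    using AS by (simp add: derivation_sum[OF D] derivation_mult[OF D])
  also have "\<dots> = (map_mat D A * B + A * map_mat D B) $$ (i, j)"
    using A B i j by (simp add: scalar_prod_def atLeast0LessThan sum.distrib)
  finally show "map_mat D (A * B) $$ (i, j) = (map_mat D A * B + A * map_mat D B) $$ (i, j)" .
qed (use A B in auto)

lemma elements_mult_mat:
  assumes A: "A \<in> carrier_mat n k" "elements_mat A \<subseteq> S"
    and B: "B \<in> carrier_mat k l" "elements_mat B \<subseteq> S"
    and S: "0 \<in> S" "\<And>x y. x \<in> S \<Longrightarrow> y \<in> S \<Longrightarrow> x + y \<in> S"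
      "\<And>x y. x \<in> S \<Longrightarrow> y \<in> S \<Longrightarrow> x * y \<in> S"
  shows "elements_mat (A * B) \<subseteq> S"
proof
  fix a assume "a \<in> elements_mat (A * B)"
  then obtain i j where ij: "i < n" "j < l" "a = (A * B) $$ (i, j)" using A B by force
  have sum_in: "sum f I \<in> S" if "\<And>t. t \<in> I \<Longrightarrow> f t \<in> S" for f and I :: "nat set"
    using that by (induction I rule: infinite_finite_induct) (auto simp: S)
  have "a = (\<Sum>t\<in>{0..<k}. A $$ (i, t) * B $$ (t, j))"
    using ij A B by (simp add: scalar_prod_def)
  also have "\<dots> \<in> S"
    using A B ij by (intro sum_in S(3)) auto
  finally show "a \<in> S" .
qed

lemma elements_transpose_mat: "elements_mat (transpose_mat A) = elements_mat A"
  unfolding elements_mat_def by auto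

lemma inverts_mat_carrier:
  assumes A: "A \<in> carrier_mat n n" and "inverts_mat A B" "inverts_mat B A"
  shows "B \<in> carrier_mat n n"
proof -
  have AB: "A * B = 1\<^sub>m n" and BA: "B * A = 1\<^sub>m (dim_row B)"
    using assms unfolding inverts_mat_def by auto
  have "dim_col B = n" using arg_cong[OF AB, of dim_col] by simp
  moreover have "dim_row B = n" using arg_cong[OF BA, of dim_col] A by simp
  ultimately show ?thesis by blast
qed

lemma inverts_mat_unique:
  assumes A: "A \<in> carrier_mat n n"
    and B: "inverts_mat A B" "inverts_mat B A" and B': "inverts_mat A B'" "inverts_mat B' A"
  shows "B' = B"
proof -
  have cB: "B \<in> carrier_mat n n" and cB': "B' \<in> carrier_mat n n"
    using inverts_mat_carrier A B B' by blast+
  have "B' = B' * (A * B)" using A B cB' unfolding inverts_mat_def by simp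
  also have "\<dots> = (B' * A) * B" using A cB cB' by simp
  also have "\<dots> = B" using B' cB cB' unfolding inverts_mat_def by simp
  finally show ?thesis .
qed

lemma minv_inverse:
  assumes inv: "invertible_over S A" and A: "A \<in> carrier_mat n n"
  shows "minv A \<in> carrier_mat n n" "elements_mat (minv A) \<subseteq> S"
    "A * minv A = 1\<^sub>m n" "minv A * A = 1\<^sub>m n" "minv (minv A) = A"
proof -
  obtain B where B: "elements_mat B \<subseteq> S" "inverts_mat A B" "inverts_mat B A"
    using inv unfolding invertible_over_def by blast
  have cB: "B \<in> carrier_mat n n" using inverts_mat_carrier A B by blast
  have "inverts_mat A (minv A) \<and> inverts_mat (minv A) A"
    unfolding minv_def by (rule someI[of _ B]) (use B in blast)
  then have minv_A: "minv A = B" using inverts_mat_unique[OF A] B by blast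
  show "minv A \<in> carrier_mat n n" "elements_mat (minv A) \<subseteq> S" using minv_A cB B by simp_all
  show "A * minv A = 1\<^sub>m n" "minv A * A = 1\<^sub>m n"
    using minv_A B A cB unfolding inverts_mat_def by auto
  have "inverts_mat B (minv B) \<and> inverts_mat (minv B) B"
    unfolding minv_def by (rule someI[of _ A]) (use B in blast)
  then show "minv (minv A) = A" using inverts_mat_unique[OF cB] B minv_A by metis
qed

lemma mult_right_cancel_mat:
  fixes A B X X' :: "'a::semiring_1 mat"
  assumes A: "A \<in> carrier_mat n k" and B: "B \<in> carrier_mat n k"
    and X: "X \<in> carrier_mat k k" "X' \<in> carrier_mat k k" "X * X' = 1\<^sub>m k"
    and eq: "A * X = B * X"
  shows "A = B"
proof -
  have "A = (A * X) * X'" using A X by (simp add: right_mult_one_mat)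
  also have "\<dots> = (B * X) * X'" by (simp only: eq)
  also have "\<dots> = B" using B X by (simp add: right_mult_one_mat)
  finally show ?thesis .
qed

lemma add_right_cancel_mat:
  fixes A B C :: "'a::group_add mat"
  assumes "A \<in> carrier_mat n k" "B \<in> carrier_mat n k" "C \<in> carrier_mat n k" "A + C = B + C"
  shows "A = B"
proof (rule eq_matI)
  fix i j assume ij: "i < dim_row B" "j < dim_col B"
  then have "(A + C) $$ (i, j) = (B + C) $$ (i, j)" using assms(4) by simp
  then show "A $$ (i, j) = B $$ (i, j)" using assms(1-3) ij by simp
qed (use assms in auto)

lemma eq_uminus_if_add_eq_zero_mat:
  fixes A B :: "'a::group_add mat"
  assumes "A \<in> carrier_mat n k" "B \<in> carrier_mat n k" "A + B = 0\<^sub>m n k"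
  shows "A = - B"
proof (rule eq_matI)
  fix i j assume ij: "i < dim_row (- B)" "j < dim_col (- B)"
  then have "(A + B) $$ (i, j) = 0" using assms by simp
  then show "A $$ (i, j) = (- B) $$ (i, j)" using assms(1,2) ij by (simp add: eq_neg_iff_add_eq_0)
qed (use assms in auto)

lemma diff_eq_iff_add_mat:
  fixes A B C :: "'a::ab_group_add mat"
  assumes "A \<in> carrier_mat n k" "B \<in> carrier_mat n k" "C \<in> carrier_mat n k"
  shows "A - B = C \<longleftrightarrow> A = C + B"
proof
  assume "A - B = C" then show "A = C + B" using assms by (auto intro!: eq_matI)
next
  assume "A = C + B" then show "A - B = C" using assms by (auto intro!: eq_matI)
qed

context bidga
begin

lemma derivation_d: "derivation_on (Om 0) d"
  unfolding derivation_on_def using d_add d_leibniz[of _ 0] by simp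

lemma derivation_db: "derivation_on (Om 0) db"
  unfolding derivation_on_def using db_add db_leibniz[of _ 0] by simp

lemma elements_mult_Om0:
  assumes "A \<in> carrier_mat n k" "elements_mat A \<subseteq> Om 0"
    and "B \<in> carrier_mat k l" "elements_mat B \<subseteq> Om 0"
  shows "elements_mat (A * B) \<subseteq> Om 0"
  using assms Om_zero Om_add Om_mult[of _ 0 _ 0] by (intro elements_mult_mat) auto

lemma map_d_d: "map_mat d (map_mat d A) = 0\<^sub>m (dim_row A) (dim_col A)"
  by (intro eq_matI) (simp_all add: d_d)

lemma intertwiner:
  assumes X: "X \<in> carrier_mat N N" "invertible_over (Om 0) X"
    and Y: "Y \<in> carrier_mat M N" and R: "R \<in> carrier_mat N N" and Q: "Q \<in> carrier_mat N M"
    and RXQY: "R * X + Q * Y = X * P"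
  shows "(R + Q * (Y * minv X)) * X = X * P"
proof -
  note Xi = minv_inverse[OF X(2) X(1)]
  have "Q * (Y * minv X) * X = Q * (Y * (minv X * X))"
    using assoc_mult_mat[OF Q mult_carrier_mat[OF Y Xi(1)] X(1)] assoc_mult_mat[OF Y Xi(1) X(1)]
    by simp
  also have "\<dots> = Q * Y" using Y Xi(4) by (simp add: right_mult_one_mat)
  finally have "Q * (Y * minv X) * X = Q * Y" .
  then show ?thesis
    using X(1) Y R Q Xi(1) RXQY by (simp add: add_mult_distrib_mat)
qed

lemma db_intertwined:
  assumes G: "G \<in> carrier_mat m N" "elements_mat G \<subseteq> Om 0"
    and X: "X \<in> carrier_mat N N" "invertible_over (Om 0) X"
    and P: "P \<in> carrier_mat N N" and T: "T \<in> carrier_mat N N" and TX: "T * X = X * P"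
    and dbX: "map_mat db X = map_mat d X * P"
    and dbGX: "map_mat db (G * X) = map_mat d (G * X) * P"
  shows "map_mat db G = map_mat d G * T"
proof -
  note Xi = minv_inverse[OF X(2) X(1)]
  have cdX: "map_mat d X \<in> carrier_mat N N" and cdG: "map_mat d G \<in> carrier_mat m N"
    using X(1) G(1) by simp_all
  have "map_mat db G * X + G * (map_mat d X * P) = map_mat db (G * X)"
    using mat_derivation_mult[OF derivation_db G X(1)] dbX by simp
  also have "\<dots> = map_mat d G * X * P + G * map_mat d X * P"
    using mat_derivation_mult[OF derivation_d G X(1)] dbGX G(1) X(1) P cdX cdG
    by (simp add: add_mult_distrib_mat[of _ m N])
  also have "\<dots> = map_mat d G * T * X + G * (map_mat d X * P)"
    using cdG X(1) P T G(1) cdX TX by simp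
  finally have "map_mat db G * X + G * (map_mat d X * P)
      = map_mat d G * T * X + G * (map_mat d X * P)" .
  then have "map_mat db G * X = map_mat d G * T * X"
    by (rule add_right_cancel_mat[rotated 3])
      (use G(1) X(1) P T cdX cdG in \<open>auto intro: mult_carrier_mat\<close>)
  then show ?thesis
    by (rule mult_right_cancel_mat[OF _ _ X(1) Xi(1) Xi(3), rotated 2])
      (use G(1) T in \<open>auto intro: mult_carrier_mat\<close>)
qed

lemma constraint_intertwined:
  assumes G: "G \<in> carrier_mat m N" and Delta: "Delta \<in> carrier_mat m m" and C: "C \<in> carrier_mat m N"
    and X: "X \<in> carrier_mat N N" "invertible_over (Om 0) X"
    and P: "P \<in> carrier_mat N N" and T: "T \<in> carrier_mat N N" and TX: "T * X = X * P"
    and GXP: "G * X * P - Delta * (G * X) = C * X"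
  shows "G * T - Delta * G = C"
proof -
  note Xi = minv_inverse[OF X(2) X(1)]
  have cGT: "G * T \<in> carrier_mat m N" and cDG: "Delta * G \<in> carrier_mat m N"
    using G T Delta by simp_all
  have "(G * T - Delta * G) * X = G * T * X - Delta * G * X"
    by (rule minus_mult_distrib_mat[OF cGT cDG X(1)])
  also have "\<dots> = G * X * P - Delta * (G * X)"
    using G T X(1) P Delta by (simp add: TX)
  finally have "(G * T - Delta * G) * X = C * X" unfolding GXP .
  then show ?thesis
    by (rule mult_right_cancel_mat[OF _ _ X(1) Xi(1) Xi(3), rotated 2])
      (use cDG C in \<open>simp_all add: minus_carrier_mat\<close>)
qed

lemma d_intertwiner:
  assumes R: "R \<in> carrier_mat N N" and Q: "Q \<in> carrier_mat N M" "elements_mat Q \<subseteq> Om 0"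
    and Phi: "Phi \<in> carrier_mat M N"
    and dR: "map_mat d R = 0\<^sub>m N N" and dQ: "map_mat d Q = 0\<^sub>m N M"
  shows "map_mat d (R + Q * Phi) = Q * map_mat d Phi"
proof -
  have "map_mat d (R + Q * Phi) = map_mat d R + (map_mat d Q * Phi + Q * map_mat d Phi)"
    using mat_derivation_add[OF derivation_d R mult_carrier_mat[OF Q(1) Phi]]
      mat_derivation_mult[OF derivation_d Q Phi] by simp
  also have "\<dots> = Q * map_mat d Phi"
    unfolding dR dQ using Q(1) Phi by simp
  finally show ?thesis .
qed

lemma gauge_equation:
  assumes G: "G \<in> carrier_mat m N" "elements_mat G \<subseteq> Om 0"
    and Delta: "Delta \<in> carrier_mat m m" and T: "T \<in> carrier_mat N N"
    and dbG: "map_mat db G = map_mat d G * T"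
    and GT: "G * T - Delta * G = C" and dC: "map_mat d C = 0\<^sub>m m N"
  shows "map_mat db G + G * map_mat d T = map_mat d (Delta * G)"
proof -
  have cGT: "G * T \<in> carrier_mat m N" and cDG: "Delta * G \<in> carrier_mat m N"
    using G(1) T Delta by simp_all
  have "map_mat d (G * T) - map_mat d (Delta * G) = 0\<^sub>m m N"
    using mat_derivation_diff[OF derivation_d cGT cDG] GT dC by simp
  then have "map_mat d (G * T) = 0\<^sub>m m N + map_mat d (Delta * G)"
    using cGT cDG by (simp add: diff_eq_iff_add_mat[of _ m N])
  then have "map_mat d (G * T) = map_mat d (Delta * G)"
    using cDG by simp
  then show ?thesis using mat_derivation_mult[OF derivation_d G T] dbG by simp
qed

lemma reduced_gauge_equation:
  assumes G: "G \<in> carrier_mat m N" "elements_mat G \<subseteq> Om 0"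
    and Delta: "Delta \<in> carrier_mat m m" "elements_mat Delta \<subseteq> Om 0"
    and Phi: "Phi \<in> carrier_mat M N" "elements_mat Phi \<subseteq> Om 0"
    and U: "U \<in> carrier_mat M m" "elements_mat U \<subseteq> Om 0" and V: "V \<in> carrier_mat N m"
    and dU: "map_mat d U = 0\<^sub>m M m" and dV: "map_mat d V = 0\<^sub>m N m" and dbV: "map_mat db V = 0\<^sub>m N m"
    and H: "map_mat db G + G * (V * transpose_mat U) * map_mat d Phi = map_mat d (Delta * G)"
  shows "map_mat db (G * V) + (G * V) * map_mat d (transpose_mat U * Phi * V)
    = map_mat d (Delta * (G * V))"
proof -
  define Ut where "Ut = transpose_mat U"
  have cUt: "Ut \<in> carrier_mat m M" and elUt: "elements_mat Ut \<subseteq> Om 0"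
    using U unfolding Ut_def by (simp_all add: elements_transpose_mat)
  have dUt: "map_mat d Ut = 0\<^sub>m m M"
    unfolding Ut_def map_mat_transpose[symmetric] dU by auto
  have cdPhi: "map_mat d Phi \<in> carrier_mat M N" and cdbG: "map_mat db G \<in> carrier_mat m N"
    using Phi G by simp_all
  have cUtPhi: "Ut * Phi \<in> carrier_mat m N" and cVUt: "V * Ut \<in> carrier_mat N M"
    and cUtdPhi: "Ut * map_mat d Phi \<in> carrier_mat m N" and cDG: "Delta * G \<in> carrier_mat m N"
    using cUt Phi V cdPhi Delta G by simp_all
  have elUtPhi: "elements_mat (Ut * Phi) \<subseteq> Om 0" and elDG: "elements_mat (Delta * G) \<subseteq> Om 0"
    using elements_mult_Om0 cUt elUt Phi Delta G by blast+
  have d_phi: "map_mat d (Ut * Phi * V) = Ut * map_mat d Phi * V"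
    using mat_derivation_mult[OF derivation_d cUtPhi elUtPhi V]
      mat_derivation_mult[OF derivation_d cUt elUt Phi(1)] dUt dV cUt Phi(1) V cdPhi
    by simp
  have db_h: "map_mat db (G * V) = map_mat db G * V"
    using mat_derivation_mult[OF derivation_db G V] dbV G(1) V cdbG by simp
  have h_dphi: "(G * V) * (Ut * map_mat d Phi * V) = G * (V * Ut) * map_mat d Phi * V"
  proof -
    have cGV: "G * V \<in> carrier_mat m m" using G(1) V by simp
    have "G * (V * Ut) * map_mat d Phi * V = (G * V) * (Ut * map_mat d Phi * V)"
      by (simp only: assoc_mult_mat[OF G(1) V cUt, symmetric] assoc_mult_mat[OF cGV cUt cdPhi]
          assoc_mult_mat[OF cGV cUtdPhi V])
    then show ?thesis ..
  qed
  have d_Delta_h: "map_mat d (Delta * (G * V)) = map_mat d (Delta * G) * V"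
    using mat_derivation_mult[OF derivation_d cDG elDG V] dV Delta G(1) V cDG by simp
  have "map_mat db G * V + G * (V * Ut) * map_mat d Phi * V
      = (map_mat db G + G * (V * Ut) * map_mat d Phi) * V"
    using cdbG G(1) cVUt cdPhi V by (simp add: add_mult_distrib_mat[of _ m N])
  then show ?thesis
    using H unfolding Ut_def[symmetric] d_phi db_h h_dphi d_Delta_h by simp
qed

text \<open>If h is invertible and db h + h d phi = d (Delta h), then g = h^-1 satisfies
  (db g - (d g) Delta) h = d phi - d (g Delta h), which is d-closed because d o d = 0.\<close>
lemma gauge_potential_closed:
  assumes h: "h \<in> carrier_mat m m" "invertible_over (Om 0) h"
    and Delta: "Delta \<in> carrier_mat m m" and phi: "phi \<in> carrier_mat m m"
    and H: "map_mat db h + h * map_mat d phi = map_mat d (Delta * h)"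
  shows "map_mat d ((map_mat db (minv h) - map_mat d (minv h) * Delta) * h) = 0\<^sub>m m m"
proof -
  define g where "g = minv h"
  note g = minv_inverse[OF h(2) h(1), folded g_def]
  define W where "W = Delta * h"
  have cW: "W \<in> carrier_mat m m" unfolding W_def using Delta h(1) by simp
  have cdbg: "map_mat db g \<in> carrier_mat m m" and cdg: "map_mat d g \<in> carrier_mat m m"
    and cdbh: "map_mat db h \<in> carrier_mat m m" and cdW: "map_mat d W \<in> carrier_mat m m"
    and cdphi: "map_mat d phi \<in> carrier_mat m m"
    using g(1) h(1) cW phi by simp_all
  have db_g: "map_mat db g * h + g * map_mat db h = 0\<^sub>m m m"
    using mat_derivation_mult[OF derivation_db g(1,2) h(1)] g(4)
      mat_derivation_one[OF derivation_db Om_one] by simp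
  have d_gW: "map_mat d (g * W) = map_mat d g * W + g * map_mat d W"
    by (rule mat_derivation_mult[OF derivation_d g(1,2) cW])
  have chdphi: "h * map_mat d phi \<in> carrier_mat m m"
    using h(1) cdphi by simp
  have db_h: "map_mat db h = map_mat d W - h * map_mat d phi"
    using diff_eq_iff_add_mat[OF cdW chdphi cdbh] H unfolding W_def[symmetric] by auto
  have "g * map_mat db h = g * map_mat d W - (g * h) * map_mat d phi"
    unfolding db_h using mult_minus_distrib_mat[OF g(1) cdW chdphi] g(1) h(1) cdphi by simp
  then have g_db_h: "g * map_mat db h = g * map_mat d W - map_mat d phi"
    using g(4) cdphi by simp
  have db_g_h: "map_mat db g * h = - (g * map_mat db h)"
    using cdbg h(1) g(1) cdbh by (intro eq_uminus_if_add_eq_zero_mat[OF _ _ db_g]) simp_all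
  have "(map_mat db g - map_mat d g * Delta) * h = map_mat db g * h - map_mat d g * W"
    using minus_mult_distrib_mat[OF cdbg mult_carrier_mat[OF cdg Delta] h(1)] cdg Delta h(1)
    unfolding W_def by simp
  also have "\<dots> = map_mat d phi - (map_mat d g * W + g * map_mat d W)"
    unfolding db_g_h g_db_h using g(1) cW cdW cdphi by (intro eq_matI) auto
  finally have K: "(map_mat db g - map_mat d g * Delta) * h = map_mat d phi - map_mat d (g * W)"
    unfolding d_gW .
  have "map_mat d (map_mat d phi) = 0\<^sub>m m m" "map_mat d (map_mat d (g * W)) = 0\<^sub>m m m"
    using map_d_d phi g(1) cW by simp_all
  then show ?thesis
    unfolding g_def[symmetric] K
    using mat_derivation_diff[OF derivation_d cdphi, of "map_mat d (g * W)"] g(1) cW by simp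
qed

lemma dressed_gauge_equation:
  assumes G: "G \<in> carrier_mat m N" "elements_mat G \<subseteq> Om 0"
    and Delta: "Delta \<in> carrier_mat m m" "elements_mat Delta \<subseteq> Om 0"
    and Phi: "Phi \<in> carrier_mat M N" "elements_mat Phi \<subseteq> Om 0"
    and gauge: "map_mat db G + G * Q * map_mat d Phi = map_mat d (Delta * G)"
    and U: "U \<in> carrier_mat M m" "elements_mat U \<subseteq> Om 0" and V: "V \<in> carrier_mat N m"
    and QVU: "Q = V * transpose_mat U" and dU: "map_mat d U = 0\<^sub>m M m"
    and dV: "map_mat d V = 0\<^sub>m N m" and dbV: "map_mat db V = 0\<^sub>m N m"
    and inv: "invertible_over (Om 0) (G * V)"
  shows "let g = minv (G * V); phi' = transpose_mat U * Phi * V in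
    map_mat db (minv g) + minv g * map_mat d phi' = map_mat d (Delta * minv g) \<and>
    map_mat d ((map_mat db g - map_mat d g * Delta) * minv g) = 0\<^sub>m m m"
proof -
  have cGV: "G * V \<in> carrier_mat m m" and cphi: "transpose_mat U * Phi * V \<in> carrier_mat m m"
    using G(1) V U(1) Phi(1) by simp_all
  have reduced: "map_mat db (G * V) + (G * V) * map_mat d (transpose_mat U * Phi * V)
      = map_mat d (Delta * (G * V))"
    by (rule reduced_gauge_equation[OF G Delta Phi U V dU dV dbV gauge[unfolded QVU]])
  show ?thesis
    unfolding Let_def minv_inverse(5)[OF inv cGV]
    using reduced gauge_potential_closed[OF cGV inv Delta(1) cphi reduced] by blast
qed

end

theorem mainTheorem7:
  fixes Om :: "nat \<Rightarrow> 'w::ring_1 set" and sc :: "complex \<Rightarrow> 'w \<Rightarrow> 'w"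
    and d db :: "'w \<Rightarrow> 'w"
    and M N m :: nat
    and X Y P R Q Phi Delta C G U V :: "'w mat"
  assumes bd: "bidga Om sc d db"
    and dims: "M \<ge> 1" "N \<ge> 1" "m \<ge> 1"
    and X: "X \<in> carrier_mat N N" "elements_mat X \<subseteq> Om 0" "invertible_over (Om 0) X"
    and Y: "Y \<in> carrier_mat M N" "elements_mat Y \<subseteq> Om 0"
    and P: "P \<in> carrier_mat N N" "elements_mat P \<subseteq> Om 0"
    and R: "R \<in> carrier_mat N N" "elements_mat R \<subseteq> Om 0"
    and Q: "Q \<in> carrier_mat N M" "elements_mat Q \<subseteq> Om 0"
    and dR: "map_mat d R = 0\<^sub>m N N"
    and dQ: "map_mat d Q = 0\<^sub>m N M"
    and dbX: "map_mat db X = map_mat d X * P"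
    and dbY: "map_mat db Y = map_mat d Y * P"
    and RXQY: "R * X + Q * Y = X * P"
    and Phi: "Phi = Y * minv X"
    and Delta: "Delta \<in> carrier_mat m m" "elements_mat Delta \<subseteq> Om 0"
    and dbDelta: "map_mat db Delta = map_mat d Delta * Delta"
    and C: "C \<in> carrier_mat m N" "elements_mat C \<subseteq> Om 0"
    and dC: "map_mat d C = 0\<^sub>m m N"
    and G: "G \<in> carrier_mat m N" "elements_mat G \<subseteq> Om 0"
    and dbGX: "map_mat db (G * X) = map_mat d (G * X) * P"
    and GXP: "G * X * P - Delta * (G * X) = C * X"
  shows "map_mat db G + G * Q * map_mat d Phi = map_mat d (Delta * G) \<and>
    ((U \<in> carrier_mat M m \<and> elements_mat U \<subseteq> Om 0 \<and>
      V \<in> carrier_mat N m \<and> elements_mat V \<subseteq> Om 0 \<and>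
      Q = V * transpose_mat U \<and>
      map_mat d U = 0\<^sub>m M m \<and> map_mat db U = 0\<^sub>m M m \<and>
      map_mat d V = 0\<^sub>m N m \<and> map_mat db V = 0\<^sub>m N m \<and>
      invertible_over (Om 0) (G * V)) \<longrightarrow>
     (let g = minv (G * V); phi' = transpose_mat U * Phi * V in
        map_mat db (minv g) + minv g * map_mat d phi' = map_mat d (Delta * minv g) \<and>
        map_mat d ((map_mat db g - map_mat d g * Delta) * minv g) = 0\<^sub>m m m))"
proof -
  interpret bidga Om sc d db by (rule bd)
  note Xi = minv_inverse[OF X(3) X(1)]
  have cPhi: "Phi \<in> carrier_mat M N" and elPhi: "elements_mat Phi \<subseteq> Om 0"
    unfolding Phi using Y X(1) Xi(1,2) elements_mult_Om0 by simp_all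
  define T where "T = R + Q * Phi"
  have cT: "T \<in> carrier_mat N N" unfolding T_def using R(1) Q(1) cPhi by simp
  have TX: "T * X = X * P" unfolding T_def Phi by (rule intertwiner[OF X(1,3) Y(1) R(1) Q(1) RXQY])
  have dbG: "map_mat db G = map_mat d G * T"
    by (rule db_intertwined[OF G X(1,3) P(1) cT TX dbX dbGX])
  have GT: "G * T - Delta * G = C"
    by (rule constraint_intertwined[OF G(1) Delta(1) C(1) X(1,3) P(1) cT TX GXP])
  have dT: "map_mat d T = Q * map_mat d Phi"
    unfolding T_def by (rule d_intertwiner[OF R(1) Q cPhi dR dQ])
  have gauge: "map_mat db G + G * Q * map_mat d Phi = map_mat d (Delta * G)"
    using gauge_equation[OF G Delta(1) cT dbG GT dC] G(1) Q(1) cPhi unfolding dT by simp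
  show ?thesis
    using gauge dressed_gauge_equation[OF G Delta cPhi elPhi gauge] by blast
qed

end
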